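(* Let $B$, $B_u$ be solutions on $[0,T]$ of the constrained and unconstrained ODEs of the context, and let $\pi^\ast,\hat\pi^\ast,\pi_u,\pi_M$ be as in the context. (i) If $0<\pi_M=\frac\alpha2<\alpha$ and $\alpha<\pi_u(t^\ast)<\beta$ for some $t^\ast\in[0,T]$, then $B(\tau)=0$ for all $\tau\in[0,T]$, $\pi^\ast(t)=\alpha$ for all $t\in[0,T]$, and the functions $\pi^\ast$ and $t\mapsto\mathrm{Cap}(\pi_u(t),\alpha,\beta)$ on $[0,T]$ are not identical. (ii) If $\pi_M>\beta>0$, then $\mathrm{sign}(\frac{\partial}{\partial t}\hat\pi^\ast(t))=\mathrm{sign}(\frac{\partial}{\partial t}\pi_u(t))=-\mathrm{sign}(\rho b)$ for all $t\in[0,T]$. Hence, if in addition $b<0$ and $\rho<0$, then $\pi^\ast(t)=\mathrm{Cap}(\pi_u(t),\alpha,\beta)$ for all $t\in[0,T]$.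
   Context: Parameters: $T>0$; $\eta,\kappa,\sigma>0$; $\rho\in(-1,1)$; $b<1$, $b\ne0$; $K=[\alpha,\beta]$, $-\infty\le\alpha<\beta\le\infty$; $\delta_K(x)=-\alpha x\mathbf 1_{\{x>0\}}-\beta x\mathbf 1_{\{x<0\}}$. $B_-=\frac{(1-b)\alpha-\eta}\sigma$, $B_+=\frac{(1-b)\beta-\eta}\sigma$; $r_0=-\frac b{2(1-b)}\eta^2$, $r_1=\frac b{1-b}\eta\sigma\rho-\kappa$, $r_2=\sigma^2(1+\frac b{1-b}\rho^2)$. Constrained ODE: $B'(\tau)=-\kappa B+\frac12\sigma^2B^2+\frac12\frac b{1-b}\inf_{\lambda\in\mathbb R}(2(1-b)\delta_K(\lambda)+(\eta+\lambda+\sigma\rho B)^2)$, $B(0)=0$. Unconstrained ODE: $B_u'(\tau)=-r_0+r_1B_u+\frac12r_2B_u^2$, $B_u(0)=0$. $\lambda^\ast(B)=[(1-b)\alpha-(\eta+\sigma\rho B)]\mathbf 1_{\{\rho B<B_-\}}+[(1-b)\beta-(\eta+\sigma\rho B)]\mathbf 1_{\{\rho B>B_+\}}$; $\pi^\ast(t)=\frac1{1-b}(\eta+\lambda^\ast(B(T-t))+\sigma\rho B(T-t))$; $\hat\pi^\ast(t)=\frac1{1-b}(\eta+\sigma\rho B(T-t))$; $\pi_u(t)=\frac1{1-b}(\eta+\sigma\rho B_u(T-t))$; $\pi_M=\frac\eta{1-b}$; $\mathrm{Cap}(x,\alpha,\beta)=\alpha$ if $x<\alpha$, $x$ if $\alpha\le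 x\le\beta$, $\beta$ if $x>\beta$; $\mathrm{sign}(x)\in\{-1,0,1\}$. *)

theory Defs
  imports "HOL-Analysis.Analysis"
begin

definition deltaK :: "ereal \<Rightarrow> ereal \<Rightarrow> real \<Rightarrow> ereal" where
  "deltaK \<alpha> \<beta> x =
     (if x > 0 then - \<alpha> * ereal x else 0) + (if x < 0 then - \<beta> * ereal x else 0)"

definition rhs_c :: "real \<Rightarrow> real \<Rightarrow> real \<Rightarrow> real \<Rightarrow> real \<Rightarrow> ereal \<Rightarrow> ereal \<Rightarrow> real \<Rightarrow> real" where
  "rhs_c \<eta> \<kappa> \<sigma> \<rho> b \<alpha> \<beta> B =
     - \<kappa> * B + 1/2 * \<sigma>^2 * B^2
     + 1/2 * (b / (1 - b)) *
       real_of_ereal (INF l. ereal (2 * (1 - b)) * deltaK \<alpha> \<beta> l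
                              + ereal ((\<eta> + l + \<sigma> * \<rho> * B)^2))"

definition r0 :: "real \<Rightarrow> real \<Rightarrow> real" where
  "r0 \<eta> b = - b / (2 * (1 - b)) * \<eta>^2"

definition r1 :: "real \<Rightarrow> real \<Rightarrow> real \<Rightarrow> real \<Rightarrow> real \<Rightarrow> real" where
  "r1 \<eta> \<kappa> \<sigma> \<rho> b = b / (1 - b) * \<eta> * \<sigma> * \<rho> - \<kappa>"

definition r2 :: "real \<Rightarrow> real \<Rightarrow> real \<Rightarrow> real" where
  "r2 \<sigma> \<rho> b = \<sigma>^2 * (1 + b / (1 - b) * \<rho>^2)"

definition rhs_u :: "real \<Rightarrow> real \<Rightarrow> real \<Rightarrow> real \<Rightarrow> real \<Rightarrow> real \<Rightarrow> real" where
  "rhs_u \<eta> \<kappa> \<sigma> \<rho> b B = - r0 \<eta> b + r1 \<eta> \<kappa> \<sigma> \<rho> b * B + 1/2 * r2 \<sigma> \<rho> b * B^2"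

definition Bminus :: "real \<Rightarrow> real \<Rightarrow> real \<Rightarrow> ereal \<Rightarrow> ereal" where
  "Bminus \<eta> \<sigma> b \<alpha> = (ereal (1 - b) * \<alpha> - ereal \<eta>) / ereal \<sigma>"

definition Bplus :: "real \<Rightarrow> real \<Rightarrow> real \<Rightarrow> ereal \<Rightarrow> ereal" where
  "Bplus \<eta> \<sigma> b \<beta> = (ereal (1 - b) * \<beta> - ereal \<eta>) / ereal \<sigma>"

definition lambda_star :: "real \<Rightarrow> real \<Rightarrow> real \<Rightarrow> real \<Rightarrow> ereal \<Rightarrow> ereal \<Rightarrow> real \<Rightarrow> real" where
  "lambda_star \<eta> \<sigma> \<rho> b \<alpha> \<beta> B =
     (if ereal (\<rho> * B) < Bminus \<eta> \<sigma> b \<alpha>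
      then real_of_ereal (ereal (1 - b) * \<alpha>) - (\<eta> + \<sigma> * \<rho> * B) else 0)
   + (if ereal (\<rho> * B) > Bplus \<eta> \<sigma> b \<beta>
      then real_of_ereal (ereal (1 - b) * \<beta>) - (\<eta> + \<sigma> * \<rho> * B) else 0)"

definition pi_star :: "real \<Rightarrow> real \<Rightarrow> real \<Rightarrow> real \<Rightarrow> ereal \<Rightarrow> ereal \<Rightarrow> real \<Rightarrow> (real \<Rightarrow> real) \<Rightarrow> real \<Rightarrow> real" where
  "pi_star \<eta> \<sigma> \<rho> b \<alpha> \<beta> T B t =
     1 / (1 - b) * (\<eta> + lambda_star \<eta> \<sigma> \<rho> b \<alpha> \<beta> (B (T - t)) + \<sigma> * \<rho> * B (T - t))"

definition pi_hat :: "real \<Rightarrow> real \<Rightarrow> real \<Rightarrow> real \<Rightarrow> real \<Rightarrow> (real \<Rightarrow> real) \<Rightarrow> real \<Rightarrow> real" where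
  "pi_hat \<eta> \<sigma> \<rho> b T B t = 1 / (1 - b) * (\<eta> + \<sigma> * \<rho> * B (T - t))"

definition pi_u :: "real \<Rightarrow> real \<Rightarrow> real \<Rightarrow> real \<Rightarrow> real \<Rightarrow> (real \<Rightarrow> real) \<Rightarrow> real \<Rightarrow> real" where
  "pi_u \<eta> \<sigma> \<rho> b T Bu t = 1 / (1 - b) * (\<eta> + \<sigma> * \<rho> * Bu (T - t))"

definition pi_M :: "real \<Rightarrow> real \<Rightarrow> real" where
  "pi_M \<eta> b = \<eta> / (1 - b)"

definition Cap :: "real \<Rightarrow> ereal \<Rightarrow> ereal \<Rightarrow> real" where
  "Cap x \<alpha> \<beta> = (if ereal x < \<alpha> then real_of_ereal \<alpha>
                   else if ereal x \<le> \<beta> then x else real_of_ereal \<beta>)"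

end

theory Submission
  imports Defs
begin

text \<open>
  The infimum in the constrained Riccati equation is attained at the projection of
  \<eta> + \<sigma>\<rho>B onto (1 - b)K. So its right-hand side is an explicit, locally Lipschitz
  function of B, and pi_star is the projection of pi_hat onto [\<alpha>, \<beta>].
  For a locally Lipschitz autonomous equation, a solution that touches an equilibrium is
  constant. Hence the right-hand side keeps along the whole solution the sign it has at B = 0.

  (i) If \<alpha> = 2 pi_M, then B = 0 is an equilibrium of the constrained equation. So B = 0,
  pi_hat = pi_M < \<alpha> and pi_star = \<alpha> throughout, which differs from Cap(pi_u) wherever
  pi_u lies strictly inside K.

  (ii) If 0 < \<beta> < pi_M, both right-hand sides have the sign of b at B = 0, hence along the
  solutions, and the time derivatives of pi_hat and pi_u have sign -sgn(\<rho>b). For b, \<rho> < 0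
  the solutions decrease from 0. So pi_hat, pi_u \<ge> pi_M > \<beta>, and both sides equal \<beta>.
\<close>

definition solves_autonomous :: "(real \<Rightarrow> real) \<Rightarrow> real \<Rightarrow> (real \<Rightarrow> real) \<Rightarrow> bool" where
  "solves_autonomous f T B \<longleftrightarrow>
     (\<forall>\<tau>\<in>{0..T}. (B has_real_derivative f (B \<tau>)) (at \<tau> within {0..T}))"

definition locally_lipschitz :: "(real \<Rightarrow> real) \<Rightarrow> bool" where
  "locally_lipschitz f \<longleftrightarrow> (\<forall>R. \<exists>L. L-lipschitz_on {-R..R} f)"

lemma has_real_derivative_nonneg_imp_mono_Icc:
  fixes W W' :: "real \<Rightarrow> real"
  assumes deriv: "\<forall>\<tau>\<in>{a..b}. (W has_real_derivative W' \<tau>) (at \<tau> within {a..b})"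
    and nonneg: "\<forall>\<tau>\<in>{a..b}. W' \<tau> \<ge> 0" and "a \<le> u" "u \<le> v" "v \<le> b"
  shows "W u \<le> W v"
proof (rule DERIV_nonneg_imp_increasing_open[OF \<open>u \<le> v\<close>])
  fix x assume "u < x" "x < v"
  then have x: "x \<in> {a..b}" and "at x within {a..b} = at x"
    using assms by (auto intro!: at_within_Icc_at)
  moreover have "(W has_real_derivative W' x) (at x within {a..b})"
    using deriv x by blast
  ultimately have "DERIV W x :> W' x"
    by simp
  then show "\<exists>y. DERIV W x :> y \<and> 0 \<le> y"
    using nonneg x by blast
next
  have "continuous_on {a..b} W"
    using deriv by (auto simp: continuous_on_eq_continuous_within intro: DERIV_continuous)
  then show "continuous_on {u..v} W"
    by (rule continuous_on_subset) (use assms in auto)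
qed

lemma exp_weighted_mono:
  fixes V V' :: "real \<Rightarrow> real"
  assumes "\<And>\<tau>. \<tau> \<in> {a..b} \<Longrightarrow> (V has_real_derivative V' \<tau>) (at \<tau> within {a..b})"
    and "\<forall>\<tau>\<in>{a..b}. 0 \<le> V' \<tau> + k * V \<tau>" and "a \<le> u" "u \<le> v" "v \<le> b"
  shows "V u * exp (k * u) \<le> V v * exp (k * v)"
proof (rule has_real_derivative_nonneg_imp_mono_Icc[where W = "\<lambda>\<tau>. V \<tau> * exp (k * \<tau>)"
      and W' = "\<lambda>\<tau>. (V' \<tau> + k * V \<tau>) * exp (k * \<tau>)"])
  show "\<forall>\<tau>\<in>{a..b}. ((\<lambda>\<tau>. V \<tau> * exp (k * \<tau>)) has_real_derivative (V' \<tau> + k * V \<tau>) * exp (k * \<tau>))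
      (at \<tau> within {a..b})"
    using assms(1) by (auto intro!: derivative_eq_intros simp: algebra_simps)
qed (use assms in auto)

lemma lipschitz_on_imp_locally_lipschitz: "L-lipschitz_on UNIV f \<Longrightarrow> locally_lipschitz f"
  unfolding locally_lipschitz_def by (blast intro: lipschitz_on_subset)

lemma locally_lipschitz_const: "locally_lipschitz (\<lambda>x. c)"
  by (rule lipschitz_on_imp_locally_lipschitz[OF lipschitz_on_constant])

lemma locally_lipschitz_ident: "locally_lipschitz (\<lambda>x. x)"
  by (rule lipschitz_on_imp_locally_lipschitz[OF lipschitz_on_id])

lemma locally_lipschitz_add:
  "locally_lipschitz f \<Longrightarrow> locally_lipschitz g \<Longrightarrow> locally_lipschitz (\<lambda>x. f x + g x)"
  unfolding locally_lipschitz_def by (metis lipschitz_on_add)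

lemma locally_lipschitz_diff:
  "locally_lipschitz f \<Longrightarrow> locally_lipschitz g \<Longrightarrow> locally_lipschitz (\<lambda>x. f x - g x)"
  unfolding locally_lipschitz_def by (metis lipschitz_on_diff)

lemma locally_lipschitz_cmult: "locally_lipschitz f \<Longrightarrow> locally_lipschitz (\<lambda>x. c * f x)"
  unfolding locally_lipschitz_def by (metis lipschitz_on_cmult_real)

lemma locally_lipschitz_power2:
  assumes "locally_lipschitz f"
  shows "locally_lipschitz (\<lambda>x. (f x)^2)"
  unfolding locally_lipschitz_def
proof
  fix R :: real
  obtain L where L: "L-lipschitz_on {-R..R} f"
    using assms unfolding locally_lipschitz_def by blast
  have "bounded (f ` {-R..R})"
    by (intro compact_imp_bounded compact_continuous_image lipschitz_on_continuous_on[OF L]) simp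
  then obtain M where "M > 0" and M: "\<forall>x\<in>{-R..R}. \<bar>f x\<bar> \<le> M"
    unfolding bounded_pos by auto
  have "(2 * M * L)-lipschitz_on {-R..R} (\<lambda>x. (f x)^2)"
  proof (rule lipschitz_onI)
    fix x y assume xy: "x \<in> {-R..R}" "y \<in> {-R..R}"
    have "\<bar>(f x)^2 - (f y)^2\<bar> = \<bar>f x + f y\<bar> * \<bar>f x - f y\<bar>"
      by (simp add: power2_eq_square abs_mult[symmetric] algebra_simps)
    also have "\<dots> \<le> (2 * M) * (L * \<bar>x - y\<bar>)"
    proof (rule mult_mono)
      show "\<bar>f x + f y\<bar> \<le> 2 * M"
        using bspec[OF M xy(1)] bspec[OF M xy(2)] abs_triangle_ineq[of "f x" "f y"] by linarith
      show "\<bar>f x - f y\<bar> \<le> L * \<bar>x - y\<bar>"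
        using lipschitz_onD[OF L xy] by (simp add: dist_real_def)
    qed (use M xy in auto)
    finally show "dist ((f x)^2) ((f y)^2) \<le> 2 * M * L * dist x y"
      by (simp add: dist_real_def mult_ac)
  next
    show "0 \<le> 2 * M * L" using \<open>M > 0\<close> lipschitz_on_nonneg[OF L] by simp
  qed
  then show "\<exists>L. L-lipschitz_on {-R..R} (\<lambda>x. (f x)^2)" ..
qed

lemma locally_lipschitz_continuous_on:
  assumes "locally_lipschitz f"
  shows "continuous_on UNIV f"
proof -
  have "isCont f x" for x
  proof -
    obtain L where "L-lipschitz_on {-(\<bar>x\<bar> + 1)..\<bar>x\<bar> + 1} f"
      using assms unfolding locally_lipschitz_def by blast
    then have "continuous_on {-(\<bar>x\<bar> + 1)..\<bar>x\<bar> + 1} f"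
      by (rule lipschitz_on_continuous_on)
    moreover have "x \<in> interior {-(\<bar>x\<bar> + 1)..\<bar>x\<bar> + 1}"
      by (auto simp: abs_if)
    ultimately show ?thesis
      using continuous_on_interior by blast
  qed
  then show ?thesis
    by (simp add: continuous_at_imp_continuous_on)
qed

lemma solves_autonomous_continuous_on:
  "solves_autonomous f T B \<Longrightarrow> continuous_on {0..T} B"
  unfolding solves_autonomous_def
  by (auto simp: continuous_on_eq_continuous_within intro: DERIV_continuous)

lemma solves_autonomous_bounded:
  assumes "solves_autonomous f T B"
  obtains R where "\<forall>\<tau>\<in>{0..T}. \<bar>B \<tau>\<bar> \<le> R"
proof -
  have "bounded (B ` {0..T})"
    using assms by (intro compact_imp_bounded compact_continuous_image solves_autonomous_continuous_on) auto
  then show ?thesis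
    using that unfolding bounded_iff by auto
qed

lemma solves_autonomous_equilibrium:
  assumes sol: "solves_autonomous f T B" and lip: "locally_lipschitz f"
    and eq: "f c = 0" "B s = c" and s: "s \<in> {0..T}"
  shows "\<forall>t\<in>{0..T}. B t = c"
proof
  fix t assume t: "t \<in> {0..T}"
  obtain R where R: "\<forall>\<tau>\<in>{0..T}. \<bar>B \<tau>\<bar> \<le> R"
    using solves_autonomous_bounded[OF sol] .
  obtain L where L: "L-lipschitz_on {-R..R} f"
    using lip unfolding locally_lipschitz_def by blast
  have "c \<in> {-R..R}" using R s eq(2) by (force simp: abs_le_iff)
  have f_bound: "\<bar>f (B \<tau>)\<bar> \<le> L * \<bar>B \<tau> - c\<bar>" if "\<tau> \<in> {0..T}" for \<tau>
  proof -
    have "B \<tau> \<in> {-R..R}" using R that by (force simp: abs_le_iff)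
    then show ?thesis
      using lipschitz_onD[OF L _ \<open>c \<in> {-R..R}\<close>] eq by (simp add: dist_real_def)
  qed
  define V where "V \<tau> = (B \<tau> - c)^2" for \<tau>
  define V' where "V' \<tau> = 2 * (B \<tau> - c) * f (B \<tau>)" for \<tau>
  have dV: "(V has_real_derivative V' \<tau>) (at \<tau> within {0..T})" if "\<tau> \<in> {0..T}" for \<tau>
    using sol that unfolding solves_autonomous_def V_def V'_def by (auto intro!: derivative_eq_intros)
  have V'_bound: "\<bar>V' \<tau>\<bar> \<le> 2 * L * V \<tau>" if "\<tau> \<in> {0..T}" for \<tau>
  proof -
    have "\<bar>V' \<tau>\<bar> = 2 * \<bar>B \<tau> - c\<bar> * \<bar>f (B \<tau>)\<bar>" unfolding V'_def abs_mult by simp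
    also have "\<dots> \<le> 2 * \<bar>B \<tau> - c\<bar> * (L * \<bar>B \<tau> - c\<bar>)"
      by (intro mult_left_mono f_bound that) simp
    also have "\<dots> = 2 * L * V \<tau>"
      using abs_mult_self_eq[of "B \<tau> - c"] by (simp add: V_def power2_eq_square)
    finally show ?thesis .
  qed
  \<comment> \<open>Gronwall in both directions: as |V'| \<le> 2LV, V exp(2Lt) increases and V exp(-2Lt) decreases.\<close>
  have V'_ge: "0 \<le> V' \<tau> + 2 * L * V \<tau>" and V'_le: "0 \<le> - V' \<tau> + 2 * L * V \<tau>"
    if "\<tau> \<in> {0..T}" for \<tau>
    using V'_bound[OF that] by (simp_all add: abs_le_iff)
  have "V s = 0"
    using eq by (simp add: V_def)
  have "V t \<le> 0"
  proof (cases "t \<le> s")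
    case True
    have "V t * exp (2 * L * t) \<le> V s * exp (2 * L * s)"
      by (rule exp_weighted_mono[OF dV]) (use V'_ge True s t in auto)
    then show ?thesis using \<open>V s = 0\<close> by (simp add: mult_le_0_iff)
  next
    case False
    have "- V s * exp (- 2 * L * s) \<le> - V t * exp (- 2 * L * t)"
      by (rule exp_weighted_mono[OF DERIV_minus[OF dV]]) (use V'_le False s t in auto)
    then show ?thesis using \<open>V s = 0\<close> by (simp add: mult_le_0_iff)
  qed
  then show "B t = c" by (simp add: V_def)
qed

lemma solves_autonomous_sgn_const:
  assumes sol: "solves_autonomous f T B" and lip: "locally_lipschitz f"
    and f0: "f (B 0) \<noteq> 0" and s: "s \<in> {0..T}"
  shows "sgn (f (B s)) = sgn (f (B 0))"
proof -
  have nonzero: "f (B \<tau>) \<noteq> 0" if "\<tau> \<in> {0..T}" for \<tau>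
  proof
    assume "f (B \<tau>) = 0"
    moreover have "0 \<in> {0..T}" using s by simp
    ultimately have "B 0 = B \<tau>"
      using solves_autonomous_equilibrium[OF sol lip _ refl that] by blast
    with \<open>f (B \<tau>) = 0\<close> f0 show False by simp
  qed
  have "continuous_on {0..T} (\<lambda>\<tau>. f (B \<tau>))"
    using continuous_on_compose2[OF locally_lipschitz_continuous_on[OF lip]
        solves_autonomous_continuous_on[OF sol]] by simp
  then have cont: "continuous_on {0..s} (\<lambda>\<tau>. f (B \<tau>))"
    by (rule continuous_on_subset) (use s in auto)
  have no_root: "\<not> (\<exists>x\<ge>0. x \<le> s \<and> f (B x) = 0)"
    using nonzero s by auto
  have "\<not> (f (B 0) \<le> 0 \<and> 0 \<le> f (B s))" "\<not> (f (B s) \<le> 0 \<and> 0 \<le> f (B 0))"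
    using IVT'[of "\<lambda>\<tau>. f (B \<tau>)" 0 0 s] IVT2'[of "\<lambda>\<tau>. f (B \<tau>)" s 0 0] cont no_root s
    by auto
  then show ?thesis
    using nonzero[OF s] f0 by (auto simp: sgn_if)
qed

lemma solves_autonomous_antimono:
  assumes "solves_autonomous f T B" "\<forall>\<tau>\<in>{0..T}. f (B \<tau>) \<le> 0" "0 \<le> u" "u \<le> v" "v \<le> T"
  shows "B v \<le> B u"
proof -
  have "- B u \<le> - B v"
    using assms unfolding solves_autonomous_def
    by (intro has_real_derivative_nonneg_imp_mono_Icc[of 0 T "\<lambda>\<tau>. - B \<tau>" "\<lambda>\<tau>. - f (B \<tau>)"])
      (auto intro: DERIV_minus)
  then show ?thesis by simp
qed

lemma solves_autonomous_reversed_has_derivative: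
  assumes sol: "solves_autonomous f T B" and t: "t \<in> {0..T}"
  shows "((\<lambda>t. B (T - t)) has_real_derivative - f (B (T - t))) (at t within {0..T})"
proof -
  have "(B has_real_derivative f (B (T - t))) (at (T - t) within (\<lambda>t. T - t) ` {0..T})"
    using sol t unfolding solves_autonomous_def by simp
  moreover have "((\<lambda>t. T - t) has_real_derivative - 1) (at t within {0..T})"
    by (auto intro!: derivative_eq_intros)
  ultimately show ?thesis
    using DERIV_image_chain by (fastforce simp: o_def)
qed

lemma Cap_eq_self: "\<alpha> \<le> ereal x \<Longrightarrow> ereal x \<le> \<beta> \<Longrightarrow> Cap x \<alpha> \<beta> = x"
  by (auto simp: Cap_def)

lemma Cap_eq_upper: "\<alpha> < \<beta> \<Longrightarrow> \<beta> < ereal x \<Longrightarrow> Cap x \<alpha> \<beta> = real_of_ereal \<beta>"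
  by (auto simp: Cap_def)

lemma ereal_Cap_bounds:
  assumes "\<alpha> < \<beta>"
  shows "\<alpha> \<le> ereal (Cap x \<alpha> \<beta>)" "ereal (Cap x \<alpha> \<beta>) \<le> \<beta>"
  using assms by (cases \<alpha>; cases \<beta>; auto simp: Cap_def)+

lemma Cap_neq_imp_bound:
  assumes "\<alpha> < \<beta>"
  shows "x < Cap x \<alpha> \<beta> \<Longrightarrow> \<alpha> = ereal (Cap x \<alpha> \<beta>)"
    and "Cap x \<alpha> \<beta> < x \<Longrightarrow> \<beta> = ereal (Cap x \<alpha> \<beta>)"
  using assms by (cases \<alpha>; cases \<beta>; simp add: Cap_def split: if_splits)+

lemma Cap_mono_contraction:
  assumes "\<alpha> < \<beta>" "x \<le> y"
  shows "Cap x \<alpha> \<beta> \<le> Cap y \<alpha> \<beta>" "Cap y \<alpha> \<beta> - Cap x \<alpha> \<beta> \<le> y - x"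
  using assms by (cases \<alpha>; cases \<beta>; auto simp: Cap_def)+

lemma lipschitz_on_Cap:
  assumes "\<alpha> < \<beta>"
  shows "1-lipschitz_on UNIV (\<lambda>x. Cap x \<alpha> \<beta>)"
proof (rule lipschitz_onI)
  fix x y :: real
  show "dist (Cap x \<alpha> \<beta>) (Cap y \<alpha> \<beta>) \<le> 1 * dist x y"
    using Cap_mono_contraction[OF assms, of x y] Cap_mono_contraction[OF assms, of y x]
    by (cases "x \<le> y") (auto simp: dist_real_def)
qed simp

lemma locally_lipschitz_Cap:
  assumes "\<alpha> < \<beta>" "locally_lipschitz f"
  shows "locally_lipschitz (\<lambda>x. Cap (f x) \<alpha> \<beta>)"
  unfolding locally_lipschitz_def
proof
  fix R :: real
  obtain L where "L-lipschitz_on {-R..R} f"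
    using assms(2) unfolding locally_lipschitz_def by blast
  moreover have "1-lipschitz_on (f ` {-R..R}) (\<lambda>x. Cap x \<alpha> \<beta>)"
    using lipschitz_on_Cap[OF assms(1)] by (rule lipschitz_on_subset) simp
  ultimately have "(1 * L)-lipschitz_on {-R..R} (\<lambda>x. Cap (f x) \<alpha> \<beta>)"
    by (rule lipschitz_on_compose2)
  then show "\<exists>L. L-lipschitz_on {-R..R} (\<lambda>x. Cap (f x) \<alpha> \<beta>)" ..
qed

lemma deltaK_ge:
  assumes "\<alpha> \<le> ereal x" "ereal x \<le> \<beta>"
  shows "ereal (- x * l) \<le> deltaK \<alpha> \<beta> l"
proof (cases l "0::real" rule: linorder_cases)
  case less
  then show ?thesis
    using assms(2) by (cases \<beta>) (auto simp: deltaK_def intro: mult_right_mono_neg)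
next
  case equal
  then show ?thesis by (simp add: deltaK_def)
next
  case greater
  then show ?thesis
    using assms(1) by (cases \<alpha>) (auto simp: deltaK_def intro: mult_right_mono)
qed

lemma deltaK_Cap:
  assumes "\<alpha> < \<beta>"
  shows "deltaK \<alpha> \<beta> (Cap c \<alpha> \<beta> - c) = ereal (- Cap c \<alpha> \<beta> * (Cap c \<alpha> \<beta> - c))"
proof -
  define m where "m = Cap c \<alpha> \<beta>"
  have "deltaK \<alpha> \<beta> (m - c) = ereal (- m * (m - c))"
  proof (cases c m rule: linorder_cases)
    case less
    then have "\<alpha> = ereal m"
      using Cap_neq_imp_bound(1)[OF assms] unfolding m_def by blast
    with less show ?thesis by (simp add: deltaK_def)
  next
    case greater
    then have "\<beta> = ereal m"
      using Cap_neq_imp_bound(2)[OF assms] unfolding m_def by blast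
    with greater show ?thesis by (simp add: deltaK_def)
  qed (simp add: deltaK_def)
  then show ?thesis unfolding m_def .
qed

lemma ereal_mult_deltaK:
  assumes "0 < p"
  shows "ereal p * deltaK \<alpha> \<beta> l = deltaK (ereal p * \<alpha>) (ereal p * \<beta>) l"
  using assms by (cases \<alpha>; cases \<beta>) (auto simp: deltaK_def)

lemma INF_deltaK_square:
  assumes "\<alpha> < \<beta>"
  shows "(INF l. 2 * deltaK \<alpha> \<beta> l + ereal ((c + l)^2)) = ereal (c^2 - (c - Cap c \<alpha> \<beta>)^2)"
proof -
  define m where "m = Cap c \<alpha> \<beta>"
  have lower: "ereal (c^2 - (c - m)^2) \<le> 2 * deltaK \<alpha> \<beta> l + ereal ((c + l)^2)" for l
  proof -
    have "ereal (- m * l) \<le> deltaK \<alpha> \<beta> l"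
      using ereal_Cap_bounds[OF assms] unfolding m_def by (rule deltaK_ge)
    then have "2 * ereal (- m * l) + ereal ((c + l)^2) \<le> 2 * deltaK \<alpha> \<beta> l + ereal ((c + l)^2)"
      by (intro add_right_mono ereal_mult_left_mono) auto
    moreover have "c^2 - (c - m)^2 \<le> 2 * (- m * l) + (c + l)^2"
      using zero_le_power2[of "l + c - m"] by (simp add: power2_eq_square algebra_simps)
    then have "ereal (c^2 - (c - m)^2) \<le> 2 * ereal (- m * l) + ereal ((c + l)^2)"
      by simp
    ultimately show ?thesis
      by (rule order_trans[rotated])
  qed
  have "2 * deltaK \<alpha> \<beta> (m - c) + ereal ((c + (m - c))^2) = ereal (2 * (- m * (m - c)) + m^2)"
    using deltaK_Cap[OF assms, of c] unfolding m_def[symmetric] by simp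
  also have "\<dots> = ereal (c^2 - (c - m)^2)"
    by (simp add: power2_eq_square algebra_simps)
  finally have attained: "2 * deltaK \<alpha> \<beta> (m - c) + ereal ((c + (m - c))^2) = ereal (c^2 - (c - m)^2)" .
  have "(INF l. 2 * deltaK \<alpha> \<beta> l + ereal ((c + l)^2)) = ereal (c^2 - (c - m)^2)"
  proof (rule antisym)
    show "(INF l. 2 * deltaK \<alpha> \<beta> l + ereal ((c + l)^2)) \<le> ereal (c^2 - (c - m)^2)"
      unfolding attained[symmetric] by (rule INF_lower) simp
  qed (rule INF_greatest[OF lower])
  then show ?thesis unfolding m_def .
qed

lemma rhs_c_closed_form:
  assumes "b < 1" "\<alpha> < \<beta>"
  shows "rhs_c \<eta> \<kappa> \<sigma> \<rho> b \<alpha> \<beta> x = - \<kappa> * x + 1/2 * \<sigma>^2 * x^2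
    + 1/2 * (b / (1 - b)) * ((\<eta> + \<sigma> * \<rho> * x)^2
      - (\<eta> + \<sigma> * \<rho> * x - Cap (\<eta> + \<sigma> * \<rho> * x) (ereal (1 - b) * \<alpha>) (ereal (1 - b) * \<beta>))^2)"
proof -
  have "0 < 1 - b" using assms by simp
  then have scaled: "ereal (1 - b) * \<alpha> < ereal (1 - b) * \<beta>"
    using assms by (intro ereal_mult_strict_left_mono) auto
  have pointwise: "ereal (2 * (1 - b)) * deltaK \<alpha> \<beta> l + ereal ((\<eta> + l + \<sigma> * \<rho> * x)^2)
      = 2 * deltaK (ereal (1 - b) * \<alpha>) (ereal (1 - b) * \<beta>) l + ereal ((\<eta> + \<sigma> * \<rho> * x + l)^2)" for l
  proof -
    have "ereal (2 * (1 - b)) * deltaK \<alpha> \<beta> l = 2 * (ereal (1 - b) * deltaK \<alpha> \<beta> l)"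
      by (simp add: mult.assoc[symmetric])
    then show ?thesis
      by (simp add: ereal_mult_deltaK[OF \<open>0 < 1 - b\<close>] add_ac)
  qed
  then show ?thesis
    unfolding rhs_c_def pointwise INF_deltaK_square[OF scaled] by simp
qed

lemma locally_lipschitz_rhs_c:
  assumes "b < 1" "\<alpha> < \<beta>"
  shows "locally_lipschitz (rhs_c \<eta> \<kappa> \<sigma> \<rho> b \<alpha> \<beta>)"
proof -
  have "ereal (1 - b) * \<alpha> < ereal (1 - b) * \<beta>"
    using assms by (intro ereal_mult_strict_left_mono) auto
  then show ?thesis
    unfolding rhs_c_closed_form[OF assms, abs_def]
    by (intro locally_lipschitz_add locally_lipschitz_diff locally_lipschitz_cmult
        locally_lipschitz_power2 locally_lipschitz_Cap locally_lipschitz_const locally_lipschitz_ident)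
qed

lemma locally_lipschitz_rhs_u: "locally_lipschitz (rhs_u \<eta> \<kappa> \<sigma> \<rho> b)"
  unfolding rhs_u_def[abs_def]
  by (intro locally_lipschitz_add locally_lipschitz_cmult locally_lipschitz_power2
      locally_lipschitz_const locally_lipschitz_ident)

lemma rhs_c_0_eq_0:
  assumes "b < 1" "\<eta> > 0" "\<alpha> < \<beta>" "\<alpha> = ereal (2 * pi_M \<eta> b)"
  shows "rhs_c \<eta> \<kappa> \<sigma> \<rho> b \<alpha> \<beta> 0 = 0"
proof -
  have "ereal (1 - b) * \<alpha> = ereal (2 * \<eta>)"
    using assms by (simp add: pi_M_def)
  moreover have "Cap \<eta> (ereal (2 * \<eta>)) (ereal (1 - b) * \<beta>) = 2 * \<eta>"
    using assms(2) by (simp add: Cap_def)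
  ultimately show ?thesis
    unfolding rhs_c_closed_form[OF assms(1,3)] by (simp add: power2_eq_square)
qed

lemma sgn_rhs_c_0:
  assumes b: "b < 1" and \<eta>: "\<eta> > 0" and K: "\<alpha> < \<beta>" and \<beta>: "0 < \<beta>" "\<beta> < ereal (pi_M \<eta> b)"
  shows "sgn (rhs_c \<eta> \<kappa> \<sigma> \<rho> b \<alpha> \<beta> 0) = sgn b"
proof -
  obtain r where r: "\<beta> = ereal r" "0 < r" "r < \<eta> / (1 - b)"
    using \<beta> by (cases \<beta>) (auto simp: pi_M_def)
  define P where "P = (1 - b) * r"
  have P: "0 < P" "P < \<eta>"
    using r b by (auto simp: P_def pos_less_divide_eq mult.commute)
  have "ereal (1 - b) * \<alpha> < ereal (1 - b) * \<beta>"
    using K b by (intro ereal_mult_strict_left_mono) auto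
  then have "Cap \<eta> (ereal (1 - b) * \<alpha>) (ereal (1 - b) * \<beta>) = P"
    using P by (simp add: Cap_eq_upper r P_def)
  then have "rhs_c \<eta> \<kappa> \<sigma> \<rho> b \<alpha> \<beta> 0 = 1/2 * (b / (1 - b)) * (P * (2 * \<eta> - P))"
    unfolding rhs_c_closed_form[OF b K] by (simp add: power2_eq_square algebra_simps)
  then show ?thesis
    using P b by (simp add: sgn_mult)
qed

lemma sgn_rhs_u_0:
  assumes "b < 1" "\<eta> \<noteq> 0"
  shows "sgn (rhs_u \<eta> \<kappa> \<sigma> \<rho> b 0) = sgn b"
proof -
  have "rhs_u \<eta> \<kappa> \<sigma> \<rho> b 0 = b * (\<eta>^2 / (2 * (1 - b)))"
    by (simp add: rhs_u_def r0_def)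
  moreover have "\<eta>^2 / (2 * (1 - b)) > 0"
    using assms by simp
  ultimately show ?thesis
    by (metis sgn_mult sgn_pos mult.right_neutral)
qed

lemma ereal_less_Bminus_iff:
  assumes "b < 1" "\<sigma> > 0"
  shows "ereal (\<rho> * x) < Bminus \<eta> \<sigma> b \<alpha> \<longleftrightarrow> ereal ((\<eta> + \<sigma> * \<rho> * x) / (1 - b)) < \<alpha>"
  using assms
  by (cases \<alpha>) (auto simp: Bminus_def pos_less_divide_eq pos_divide_less_eq algebra_simps)

lemma Bplus_less_ereal_iff:
  assumes "b < 1" "\<sigma> > 0"
  shows "Bplus \<eta> \<sigma> b \<beta> < ereal (\<rho> * x) \<longleftrightarrow> \<beta> < ereal ((\<eta> + \<sigma> * \<rho> * x) / (1 - b))"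
  using assms
  by (cases \<beta>) (auto simp: Bplus_def pos_less_divide_eq pos_divide_less_eq algebra_simps)

lemma real_of_ereal_scale:
  "\<bar>\<alpha>\<bar> \<noteq> \<infinity> \<Longrightarrow> real_of_ereal (ereal p * \<alpha>) = p * real_of_ereal \<alpha>"
  by (cases \<alpha>) auto

lemma pi_star_eq_Cap_pi_hat:
  assumes b: "b < 1" and \<sigma>: "\<sigma> > 0" and K: "\<alpha> < \<beta>"
  shows "pi_star \<eta> \<sigma> \<rho> b \<alpha> \<beta> T B t = Cap (pi_hat \<eta> \<sigma> \<rho> b T B t) \<alpha> \<beta>"
proof -
  define x where "x = B (T - t)"
  define h where "h = (\<eta> + \<sigma> * \<rho> * x) / (1 - b)"
  have pi_hat: "pi_hat \<eta> \<sigma> \<rho> b T B t = h"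
    by (simp add: pi_hat_def h_def x_def)
  have lambda: "lambda_star \<eta> \<sigma> \<rho> b \<alpha> \<beta> x =
      (if ereal h < \<alpha> then real_of_ereal (ereal (1 - b) * \<alpha>) - (\<eta> + \<sigma> * \<rho> * x) else 0)
    + (if \<beta> < ereal h then real_of_ereal (ereal (1 - b) * \<beta>) - (\<eta> + \<sigma> * \<rho> * x) else 0)"
    unfolding lambda_star_def ereal_less_Bminus_iff[OF b \<sigma>] Bplus_less_ereal_iff[OF b \<sigma>] h_def ..
  consider (below) "ereal h < \<alpha>" | (above) "\<beta> < ereal h" | (inside) "\<alpha> \<le> ereal h" "ereal h \<le> \<beta>"
    by force
  then show ?thesis
  proof cases
    case below
    then have "\<not> \<beta> < ereal h" "\<bar>\<alpha>\<bar> \<noteq> \<infinity>"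
      using K by (auto dest: order.strict_trans)
    with below b show ?thesis
      unfolding pi_star_def pi_hat x_def[symmetric] lambda
      by (simp add: Cap_def real_of_ereal_scale)
  next
    case above
    then have "\<not> ereal h < \<alpha>" "\<bar>\<beta>\<bar> \<noteq> \<infinity>"
      using K by (auto dest: order.strict_trans)
    with above K b show ?thesis
      unfolding pi_star_def pi_hat x_def[symmetric] lambda
      by (simp add: Cap_eq_upper real_of_ereal_scale)
  next
    case inside
    then have "\<not> ereal h < \<alpha>" "\<not> \<beta> < ereal h"
      by (simp_all add: not_less)
    then have "lambda_star \<eta> \<sigma> \<rho> b \<alpha> \<beta> x = 0"
      unfolding lambda by simp
    then show ?thesis
      unfolding pi_star_def pi_hat x_def[symmetric] Cap_eq_self[OF inside]
      by (simp add: h_def)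
  qed
qed

lemma pi_u_eq_pi_hat: "pi_u = pi_hat"
  by (simp add: fun_eq_iff pi_u_def pi_hat_def)

lemma pi_M_le_pi_hat:
  assumes "b < 1" "\<sigma> > 0" "\<rho> \<le> 0" "B (T - t) \<le> 0"
  shows "pi_M \<eta> b \<le> pi_hat \<eta> \<sigma> \<rho> b T B t"
proof -
  have "0 \<le> \<rho> * B (T - t)"
    using assms(3,4) by (rule mult_nonpos_nonpos)
  then have "0 \<le> \<sigma> * \<rho> * B (T - t)"
    using assms(2) by (simp add: mult.assoc)
  then show ?thesis
    using assms(1) by (simp add: pi_M_def pi_hat_def divide_right_mono)
qed

lemma pi_hat_has_derivative_sgn:
  assumes sol: "solves_autonomous f T B" and sgn_f: "\<forall>\<tau>\<in>{0..T}. sgn (f (B \<tau>)) = sgn b"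
    and b: "b < 1" and \<sigma>: "\<sigma> > 0" and t: "t \<in> {0..T}"
  shows "\<exists>D. (pi_hat \<eta> \<sigma> \<rho> b T B has_real_derivative D) (at t within {0..T}) \<and> sgn D = - sgn (\<rho> * b)"
proof (intro exI conjI)
  show "(pi_hat \<eta> \<sigma> \<rho> b T B has_real_derivative 1 / (1 - b) * (\<sigma> * \<rho> * - f (B (T - t))))
      (at t within {0..T})"
    unfolding pi_hat_def[abs_def]
    using solves_autonomous_reversed_has_derivative[OF sol t] b by (auto intro!: derivative_eq_intros)
  have "sgn (f (B (T - t))) = sgn b"
    using sgn_f t by simp
  then show "sgn (1 / (1 - b) * (\<sigma> * \<rho> * - f (B (T - t)))) = - sgn (\<rho> * b)"
    using b \<sigma> by (simp add: sgn_mult)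
qed

lemma lower_bound_regime:
  assumes b: "b < 1" and \<eta>: "\<eta> > 0" and \<sigma>: "\<sigma> > 0" and K: "\<alpha> < \<beta>" and T: "0 \<le> T"
    and \<alpha>: "ereal (pi_M \<eta> b) = \<alpha> / 2"
    and sol: "solves_autonomous (rhs_c \<eta> \<kappa> \<sigma> \<rho> b \<alpha> \<beta>) T B" and B0: "B 0 = 0"
  shows "(\<forall>\<tau>\<in>{0..T}. B \<tau> = 0) \<and> (\<forall>t\<in>{0..T}. ereal (pi_star \<eta> \<sigma> \<rho> b \<alpha> \<beta> T B t) = \<alpha>)"
proof
  from \<alpha> have \<alpha>_eq: "\<alpha> = ereal (2 * pi_M \<eta> b)"
    by (cases \<alpha>) auto
  show B_zero: "\<forall>\<tau>\<in>{0..T}. B \<tau> = 0"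
    using solves_autonomous_equilibrium[OF sol locally_lipschitz_rhs_c[OF b K]
        rhs_c_0_eq_0[OF b \<eta> K \<alpha>_eq] B0] T by simp
  have "pi_star \<eta> \<sigma> \<rho> b \<alpha> \<beta> T B t = Cap (pi_M \<eta> b) \<alpha> \<beta>" if "t \<in> {0..T}" for t
    using B_zero that by (simp add: pi_star_eq_Cap_pi_hat[OF b \<sigma> K] pi_hat_def pi_M_def)
  moreover have "ereal (pi_M \<eta> b) < \<alpha>"
    using b \<eta> by (simp add: \<alpha>_eq pi_M_def divide_strict_right_mono)
  ultimately show "\<forall>t\<in>{0..T}. ereal (pi_star \<eta> \<sigma> \<rho> b \<alpha> \<beta> T B t) = \<alpha>"
    by (simp add: Cap_def \<alpha>_eq)
qed

lemma upper_bound_regime: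
  assumes b: "b < 1" "b \<noteq> 0" and \<eta>: "\<eta> > 0" and \<sigma>: "\<sigma> > 0" and K: "\<alpha> < \<beta>"
    and \<beta>: "0 < \<beta>" "\<beta> < ereal (pi_M \<eta> b)"
    and sol: "solves_autonomous (rhs_c \<eta> \<kappa> \<sigma> \<rho> b \<alpha> \<beta>) T B" and B0: "B 0 = 0"
    and sol_u: "solves_autonomous (rhs_u \<eta> \<kappa> \<sigma> \<rho> b) T Bu" and Bu0: "Bu 0 = 0"
    and t: "t \<in> {0..T}"
  shows "(\<exists>D. (pi_hat \<eta> \<sigma> \<rho> b T B has_real_derivative D) (at t within {0..T})
            \<and> sgn D = - sgn (\<rho> * b))
       \<and> (\<exists>D. (pi_u \<eta> \<sigma> \<rho> b T Bu has_real_derivative D) (at t within {0..T})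
            \<and> sgn D = - sgn (\<rho> * b))"
    and "b < 0 \<Longrightarrow> \<rho> < 0 \<Longrightarrow> pi_star \<eta> \<sigma> \<rho> b \<alpha> \<beta> T B t = Cap (pi_u \<eta> \<sigma> \<rho> b T Bu t) \<alpha> \<beta>"
proof -
  have sgn_B: "\<forall>\<tau>\<in>{0..T}. sgn (rhs_c \<eta> \<kappa> \<sigma> \<rho> b \<alpha> \<beta> (B \<tau>)) = sgn b"
    using solves_autonomous_sgn_const[OF sol locally_lipschitz_rhs_c[OF b(1) K]]
      sgn_rhs_c_0[OF b(1) \<eta> K \<beta>] b(2) B0 by (metis sgn_0_0)
  have sgn_Bu: "\<forall>\<tau>\<in>{0..T}. sgn (rhs_u \<eta> \<kappa> \<sigma> \<rho> b (Bu \<tau>)) = sgn b"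
    using solves_autonomous_sgn_const[OF sol_u locally_lipschitz_rhs_u]
      sgn_rhs_u_0[OF b(1)] \<eta> b(2) Bu0 by (metis less_irrefl sgn_0_0)
  show "(\<exists>D. (pi_hat \<eta> \<sigma> \<rho> b T B has_real_derivative D) (at t within {0..T})
            \<and> sgn D = - sgn (\<rho> * b))
       \<and> (\<exists>D. (pi_u \<eta> \<sigma> \<rho> b T Bu has_real_derivative D) (at t within {0..T})
            \<and> sgn D = - sgn (\<rho> * b))"
    unfolding pi_u_eq_pi_hat
    using pi_hat_has_derivative_sgn[OF sol sgn_B b(1) \<sigma> t]
      pi_hat_has_derivative_sgn[OF sol_u sgn_Bu b(1) \<sigma> t] ..
  assume "b < 0" "\<rho> < 0"
  then have "\<forall>\<tau>\<in>{0..T}. rhs_c \<eta> \<kappa> \<sigma> \<rho> b \<alpha> \<beta> (B \<tau>) \<le> 0"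
    "\<forall>\<tau>\<in>{0..T}. rhs_u \<eta> \<kappa> \<sigma> \<rho> b (Bu \<tau>) \<le> 0"
    using sgn_B sgn_Bu by (simp_all add: sgn_1_neg less_imp_le)
  then have "B (T - t) \<le> 0" "Bu (T - t) \<le> 0"
    using solves_autonomous_antimono[OF sol, of 0 "T - t"]
      solves_autonomous_antimono[OF sol_u, of 0 "T - t"] t B0 Bu0 by auto
  then have "\<beta> < ereal (pi_hat \<eta> \<sigma> \<rho> b T B t)" "\<beta> < ereal (pi_u \<eta> \<sigma> \<rho> b T Bu t)"
    using pi_M_le_pi_hat[OF b(1) \<sigma>, of \<rho>] \<beta>(2) \<open>\<rho> < 0\<close>
    unfolding pi_u_eq_pi_hat by (auto intro: order.strict_trans2)
  then show "pi_star \<eta> \<sigma> \<rho> b \<alpha> \<beta> T B t = Cap (pi_u \<eta> \<sigma> \<rho> b T Bu t) \<alpha> \<beta>"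
    by (simp add: pi_star_eq_Cap_pi_hat[OF b(1) \<sigma> K] Cap_eq_upper[OF K])
qed

theorem corollary2p11:
  fixes T \<eta> \<kappa> \<sigma> \<rho> b :: real and \<alpha> \<beta> :: ereal and B Bu :: "real \<Rightarrow> real"
  assumes T: "T > 0" and \<eta>: "\<eta> > 0" and \<kappa>: "\<kappa> > 0" and \<sigma>: "\<sigma> > 0"
    and \<rho>: "-1 < \<rho>" "\<rho> < 1" and b: "b < 1" "b \<noteq> 0"
    and K: "\<alpha> < \<beta>"
    and B_ode: "B 0 = 0"
      "\<forall>\<tau>\<in>{0..T}. (B has_real_derivative rhs_c \<eta> \<kappa> \<sigma> \<rho> b \<alpha> \<beta> (B \<tau>)) (at \<tau> within {0..T})"
    and Bu_ode: "Bu 0 = 0"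
      "\<forall>\<tau>\<in>{0..T}. (Bu has_real_derivative rhs_u \<eta> \<kappa> \<sigma> \<rho> b (Bu \<tau>)) (at \<tau> within {0..T})"
  shows
    "((0 < pi_M \<eta> b \<and> ereal (pi_M \<eta> b) = \<alpha> / 2 \<and> ereal (pi_M \<eta> b) < \<alpha> \<and>
      (\<exists>t0\<in>{0..T}. \<alpha> < ereal (pi_u \<eta> \<sigma> \<rho> b T Bu t0) \<and> ereal (pi_u \<eta> \<sigma> \<rho> b T Bu t0) < \<beta>))
     \<longrightarrow> (\<forall>\<tau>\<in>{0..T}. B \<tau> = 0)
       \<and> (\<forall>t\<in>{0..T}. ereal (pi_star \<eta> \<sigma> \<rho> b \<alpha> \<beta> T B t) = \<alpha>)
       \<and> \<not> (\<forall>t\<in>{0..T}. pi_star \<eta> \<sigma> \<rho> b \<alpha> \<beta> T B t = Cap (pi_u \<eta> \<sigma> \<rho> b T Bu t) \<alpha> \<beta>))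
   \<and>
    ((ereal (pi_M \<eta> b) > \<beta> \<and> \<beta> > 0)
     \<longrightarrow> (\<forall>t\<in>{0..T}.
            (\<exists>D. (pi_hat \<eta> \<sigma> \<rho> b T B has_real_derivative D) (at t within {0..T})
                 \<and> sgn D = - sgn (\<rho> * b))
          \<and> (\<exists>D. (pi_u \<eta> \<sigma> \<rho> b T Bu has_real_derivative D) (at t within {0..T})
                 \<and> sgn D = - sgn (\<rho> * b)))
       \<and> (b < 0 \<and> \<rho> < 0 \<longrightarrow>
            (\<forall>t\<in>{0..T}. pi_star \<eta> \<sigma> \<rho> b \<alpha> \<beta> T B t = Cap (pi_u \<eta> \<sigma> \<rho> b T Bu t) \<alpha> \<beta>)))"
proof -
  have sol: "solves_autonomous (rhs_c \<eta> \<kappa> \<sigma> \<rho> b \<alpha> \<beta>) T B"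
    and sol_u: "solves_autonomous (rhs_u \<eta> \<kappa> \<sigma> \<rho> b) T Bu"
    using B_ode(2) Bu_ode(2) unfolding solves_autonomous_def .
  have "0 \<le> T" using T by simp
  note lower = lower_bound_regime[OF b(1) \<eta> \<sigma> K \<open>0 \<le> T\<close> _ sol B_ode(1)]
  note upper = upper_bound_regime[OF b \<eta> \<sigma> K _ _ sol B_ode(1) sol_u Bu_ode(1)]
  have Cap_inside: "x \<noteq> Cap y \<alpha> \<beta>" if "ereal x = \<alpha>" "\<alpha> < ereal y" "ereal y < \<beta>" for x y
    using that by (auto simp: Cap_eq_self)
  show ?thesis
    using lower upper Cap_inside by blast
qed

end
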